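(* Let $J=\{m,\dots,m+l-1\}$ with $(J,1)\in\mathcal I$. Let: - $w=a_m(0)=\dots=a_{m+l-1}(0)$; - $c_i=x^{-1}(a_i-w)\in\mathbb C[[x]]$ for $i\in J$; - $\mu=\tfrac12\min_{i\notin J}|a_i(0)-w|$. Let $0<r'\le\varepsilon$ be such that $|a_i(z)-a_i(0)|<\mu$ for all $z\in B_{r'}$ and all $i$. Let $z_0\in B_{r'}^*$. Then the loop $t\mapsto(a_1(e(t)z_0),\dots,a_d(e(t)z_0))$, $t\in[0,1]$, in $Y_d$ is homotopic (relative to its basepoint) to the concatenation of the loop $\lambda_{J,1}$ followed by the loop $$t\mapsto\Big((a_i(e(t)z_0))_{1\le i\le m-1},\ (w+z_0c_i(e(t)z_0))_{m\le i\le m+l-1},\ (a_i(e(t)z_0))_{m+l\le i\le d}\Big).$$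
   Context: **Setting.** Let $d\ge2$ and let $a_1,\dots,a_d\in\mathbb C[[x]]$ be distinct power series with positive radii of convergence. Let $\varepsilon>0$ be such that each $a_i$ converges on the closure of $B_\varepsilon=\{|z|<\varepsilon\}$ and $a_i(z)\ne a_j(z)$ for $0<|z|<\varepsilon$, $i\ne j$. Write $B_\rho^*=\{0<|z|<\rho\}$ and $e(t)=e^{2\pi\sqrt{-1}t}$. **Configuration space.** $Y_d=\mathbb C^d\smallsetminus\bigcup_{i<j}\{z_i=z_j\}$ is the ordered configuration space. **Clusters.** Let $e_{i,j}=v_x(a_i-a_j)$. $\mathcal I$ is the set of pairs $(I,n)$ with $I\subseteq\{1,\dots,d\}$, $|I|\ge2$, and $n\ge1$, such that $e_{i,j}\ge n$ for all distinct $i,j\in I$ and $I$ is maximal with this property. Assume the ordering of the $a_i$ is such that for each $m$, the map $i\mapsto e_{m,i}$ on $\{m+1,\dots,d\}$ is weakly decreasing. With this ordering every $I$ with $(I,n)\in\mathcal I$ is an interval $\{m,\dots,m+l-1\}$. For $(I,n)\in\mathcal I$ with $I=\{m,\dots,m+l-1\}$: - $b_{I,n}$ is the common truncation $\sum_{k<n}c_kx^k$ of the $a_i$, $i\in I$; - $w_{I,n}=b_{I,n}(z_0)$; - $\lambda_{I,n}$ is the loop in $Y_d$ $$t\mapsto\big((a_i(z_0))_{i<m},\ (w_{I,n}+e(t)(a_i(z_0)-w_{I,n}))_{i\in I},\ (a_i(z_0))_{i\ge m+l}\big),\quad t\in[0,1].$$ *)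

theory Defs
  imports "HOL-Analysis.Analysis"
begin

definition ee :: "real \<Rightarrow> complex" where
  "ee t = exp (2 * of_real pi * \<i> * of_real t)"

text \<open>Ordered configuration space Y_d, realised inside nat => complex (product topology),
  coordinates 1..d, all other coordinates equal to 0.\<close>
definition confY :: "nat \<Rightarrow> (nat \<Rightarrow> complex) set" where
  "confY d = {z. (\<forall>i. i \<notin> {1..d} \<longrightarrow> z i = 0) \<and>
                 (\<forall>i\<in>{1..d}. \<forall>j\<in>{1..d}. i \<noteq> j \<longrightarrow> z i \<noteq> z j)}"

definition eval_ij :: "(nat \<Rightarrow> complex fps) \<Rightarrow> nat \<Rightarrow> nat \<Rightarrow> nat" where
  "eval_ij a i j = subdegree (a i - a j)"

definition is_cluster :: "(nat \<Rightarrow> complex fps) \<Rightarrow> nat \<Rightarrow> nat set \<Rightarrow> nat \<Rightarrow> bool" where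
  "is_cluster a d I n \<longleftrightarrow> I \<subseteq> {1..d} \<and> card I \<ge> 2 \<and> n \<ge> 1 \<and>
     (\<forall>i\<in>I. \<forall>j\<in>I. i \<noteq> j \<longrightarrow> eval_ij a i j \<ge> n) \<and>
     (\<forall>I'. I \<subseteq> I' \<and> I' \<subseteq> {1..d} \<and> (\<forall>i\<in>I'. \<forall>j\<in>I'. i \<noteq> j \<longrightarrow> eval_ij a i j \<ge> n)
           \<longrightarrow> I' = I)"

text \<open>b_{I,n}: common truncation sum_{k<n} c_k x^k, evaluated at z\<close>
definition cluster_b :: "(nat \<Rightarrow> complex fps) \<Rightarrow> nat set \<Rightarrow> nat \<Rightarrow> complex \<Rightarrow> complex" where
  "cluster_b a I n z = (\<Sum>k<n. fps_nth (a (Min I)) k * z ^ k)"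

definition cluster_loop ::
  "(nat \<Rightarrow> complex fps) \<Rightarrow> nat \<Rightarrow> nat set \<Rightarrow> nat \<Rightarrow> complex \<Rightarrow> real \<Rightarrow> nat \<Rightarrow> complex" where
  "cluster_loop a d I n z0 = (\<lambda>t i.
     if i \<in> I then cluster_b a I n z0 + ee t * (eval_fps (a i) z0 - cluster_b a I n z0)
     else if i \<in> {1..d} then eval_fps (a i) z0 else 0)"

end

theory Submission
  imports Defs
begin

text \<open>
  Write \<open>a\<^sub>i(\<zeta>) = w + \<zeta> c\<^sub>i(\<zeta>)\<close> for the cluster \<open>J\<close> and consider the two-parameter family in
  which the cluster coordinates are \<open>w + e(u) z\<^sub>0 c\<^sub>i(e(v) z\<^sub>0)\<close> and the others are \<open>a\<^sub>i(e(v) z\<^sub>0)\<close>.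
  Every member lies in \<open>Y\<^sub>d\<close>: within the cluster distinctness is that of the \<open>a\<^sub>i\<close>, and the
  cluster stays within \<open>\<mu>\<close> of \<open>w\<close> while every other coordinate stays within \<open>\<mu>\<close> of its own
  constant term, which is \<open>2\<mu>\<close> away from \<open>w\<close>. The given loop is the diagonal \<open>u = v\<close> of the
  unit square, the loop \<open>\<lambda>\<^sub>J\<^sub>,\<^sub>1\<close> is its bottom edge and the second loop its right edge, and in
  the convex square the diagonal is homotopic to bottom edge followed by right edge.
\<close>

lemma ee_0 [simp]: "ee 0 = 1"
  unfolding ee_def by simp

lemma ee_1 [simp]: "ee 1 = 1"
  unfolding ee_def by (simp add: exp_two_pi_i)

lemma norm_ee [simp]: "norm (ee t) = 1"
  unfolding ee_def by (simp add: norm_exp_eq_Re)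

lemma ee_nonzero [simp]: "ee t \<noteq> 0"
  unfolding ee_def by simp

lemma continuous_on_ee [continuous_intros]:
  "continuous_on S f \<Longrightarrow> continuous_on S (\<lambda>x. ee (f x))"
  unfolding ee_def by (intro continuous_intros)

lemma eval_fps_eq_nth0_plus_shift:
  fixes f :: "'a :: {banach, real_normed_field} fps"
  assumes "norm z < fps_conv_radius f"
  shows "eval_fps f z = fps_nth f 0 + z * eval_fps (fps_shift 1 f) z"
proof -
  have "(\<lambda>n. z * (fps_nth (fps_shift 1 f) n * z ^ n)) sums (z * eval_fps (fps_shift 1 f) z)"
    using assms by (intro sums_mult sums_eval_fps) simp
  hence "(\<lambda>n. fps_nth f (Suc n) * z ^ Suc n) sums (z * eval_fps (fps_shift 1 f) z)"
    by (simp add: mult_ac)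
  hence "(\<lambda>n. fps_nth f n * z ^ n) sums (z * eval_fps (fps_shift 1 f) z + fps_nth f 0)"
    by (subst (asm) sums_Suc_iff) simp
  with sums_eval_fps[OF assms] show ?thesis
    using sums_unique2 by (metis add.commute)
qed

lemma fps_shift_diff_const [simp]:
  fixes f :: "'a :: group_add fps"
  shows "n > 0 \<Longrightarrow> fps_shift n (f - fps_const c) = fps_shift n f"
  by (simp add: fps_eq_iff)

lemma norm_less_fps_conv_radius:
  fixes f :: "'a :: {banach, real_normed_div_algebra} fps"
  assumes "summable (\<lambda>k. fps_nth f k * of_real r ^ k)" "norm z < r"
  shows "norm z < fps_conv_radius f"
proof -
  have "ereal \<bar>r\<bar> \<le> fps_conv_radius f"
    using conv_radius_geI[OF assms(1)] by (simp add: fps_conv_radius_def)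
  moreover have "ereal (norm z) < ereal \<bar>r\<bar>"
    using assms(2) by simp
  ultimately show ?thesis
    using less_le_trans by blast
qed

lemma cluster_nth0_eq:
  assumes "is_cluster a d I n" "i \<in> I" "j \<in> I"
  shows "fps_nth (a i) 0 = fps_nth (a j) 0"
proof (cases "i = j")
  case False
  have "n \<ge> 1" "\<forall>i\<in>I. \<forall>j\<in>I. i \<noteq> j \<longrightarrow> eval_ij a i j \<ge> n"
    using assms(1) by (simp_all add: is_cluster_def)
  with assms(2,3) False have "1 \<le> subdegree (a i - a j)"
    unfolding eval_ij_def by fastforce
  hence "fps_nth (a i - a j) 0 = 0" by (intro nth_less_subdegree_zero) simp
  thus ?thesis by simp
qed simp

lemma neq_if_near_distant_centres:
  fixes x y p q :: "'a :: real_normed_vector"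
  assumes "norm (x - p) < norm (q - p) / 2" "norm (y - q) < norm (q - p) / 2"
  shows "x \<noteq> y"
proof
  assume "x = y"
  hence "norm (q - p) \<le> norm (x - p) + norm (y - q)"
    using norm_triangle_ineq4[of "x - p" "x - q"] by (simp add: norm_minus_commute)
  with assms show False by simp
qed

lemma homotopic_paths_diagonal_square:
  assumes "continuous_on ({0..1} \<times> {0..1}) G" "G \<in> {0..1} \<times> {0..1} \<rightarrow> S"
  shows "homotopic_paths S (\<lambda>t. G (t, t)) ((\<lambda>t. G (t, 0)) +++ (\<lambda>t. G (1, t)))"
proof -
  let ?Q = "{0..1::real} \<times> {0..1::real}"
  have "path (\<lambda>t::real. (t, t))"
    unfolding path_def by (intro continuous_intros)
  moreover have "path ((\<lambda>t::real. (t, 0::real)) +++ (\<lambda>t. (1, t)))"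
    by (rule path_join_imp)
       (simp_all add: path_def pathstart_def pathfinish_def continuous_on_Pair)
  ultimately have "homotopic_paths ?Q (\<lambda>t. (t, t)) ((\<lambda>t. (t, 0)) +++ (\<lambda>t. (1, t)))"
    by (intro homotopic_paths_linear closed_segment_subset convex_Times)
       (auto simp: pathstart_def pathfinish_def joinpaths_def)
  from homotopic_paths_continuous_image[OF this assms]
  show ?thesis unfolding path_compose_join by (simp add: comp_def)
qed

text \<open>The paper's \<open>c\<^sub>i = x\<^sup>-\<^sup>1(a\<^sub>i - w)\<close> is \<open>fps_shift 1 (a i)\<close> here, by \<open>fps_shift_diff_const\<close>.\<close>
definition cluster_homotopy ::
  "(nat \<Rightarrow> complex fps) \<Rightarrow> nat \<Rightarrow> nat set \<Rightarrow> complex \<Rightarrow> complex \<Rightarrow> real \<times> real \<Rightarrow> nat \<Rightarrow> complex"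
  where
  "cluster_homotopy a d J w z0 = (\<lambda>(u, v) i.
     if i \<in> J then w + ee u * z0 * eval_fps (fps_shift 1 (a i)) (ee v * z0)
     else if i \<in> {1..d} then eval_fps (a i) (ee v * z0) else 0)"

lemma continuous_on_cluster_homotopy:
  assumes "J \<subseteq> {1..d}" "\<forall>i\<in>{1..d}. norm z0 < fps_conv_radius (a i)"
  shows "continuous_on S (cluster_homotopy a d J w z0)"
proof (intro continuous_on_coordinatewise_then_product)
  fix i
  have circle: "(\<lambda>x. ee (snd x) * z0) ` S \<subseteq> eball 0 (fps_conv_radius (f :: complex fps))"
    if "norm z0 < fps_conv_radius f" for f
    using that by (auto simp: norm_mult)
  show "continuous_on S (\<lambda>x. cluster_homotopy a d J w z0 x i)"
    using assms(1) assms(2)[rule_format, of i]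
    unfolding cluster_homotopy_def case_prod_unfold
    by (cases "i \<in> J"; cases "i \<in> {1..d}") (auto intro!: continuous_intros circle)
qed

lemma cluster_homotopy_cluster_coord:
  assumes "i \<in> J" "fps_nth (a i) 0 = w" "norm z0 < fps_conv_radius (a i)"
  shows "ee v * (cluster_homotopy a d J w z0 (u, v) i - w) = ee u * (eval_fps (a i) (ee v * z0) - w)"
proof -
  have "norm (ee v * z0) < fps_conv_radius (a i)"
    using assms(3) by (simp add: norm_mult)
  from eval_fps_eq_nth0_plus_shift[OF this] assms(1,2) show ?thesis
    by (simp add: cluster_homotopy_def algebra_simps)
qed

lemma cluster_homotopy_in_confY:
  assumes J: "J \<subseteq> {1..d}" and w: "\<forall>i\<in>J. fps_nth (a i) 0 = w"
    and rad: "\<forall>i\<in>{1..d}. norm z0 < fps_conv_radius (a i)"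
    and sep: "\<forall>i\<in>{1..d}. \<forall>j\<in>{1..d}. i \<noteq> j \<longrightarrow>
               (\<forall>\<zeta>. norm \<zeta> = norm z0 \<longrightarrow> eval_fps (a i) \<zeta> \<noteq> eval_fps (a j) \<zeta>)"
    and near: "\<forall>\<zeta>. norm \<zeta> = norm z0 \<longrightarrow> (\<forall>i\<in>{1..d}. \<forall>k\<in>{1..d} - J.
               norm (eval_fps (a i) \<zeta> - fps_nth (a i) 0) < norm (fps_nth (a k) 0 - w) / 2)"
  shows "cluster_homotopy a d J w z0 p \<in> confY d"
proof -
  obtain u v where p: "p = (u, v)" by fastforce
  define G where "G = cluster_homotopy a d J w z0 p"
  define \<zeta> where "\<zeta> = ee v * z0"
  have \<zeta>: "norm \<zeta> = norm z0" by (simp add: \<zeta>_def norm_mult)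
  have cluster: "ee v * (G i - w) = ee u * (eval_fps (a i) \<zeta> - w)" if "i \<in> J" for i
    unfolding G_def p \<zeta>_def using that J w rad by (intro cluster_homotopy_cluster_coord) auto
  have other: "G k = eval_fps (a k) \<zeta>" if "k \<in> {1..d} - J" for k
    using that by (simp add: G_def p \<zeta>_def cluster_homotopy_def)
  have mixed: "G i \<noteq> G k" if i: "i \<in> J" and k: "k \<in> {1..d} - J" for i k
  proof (rule neq_if_near_distant_centres)
    have "norm (G i - w) = norm (eval_fps (a i) \<zeta> - fps_nth (a i) 0)"
      using arg_cong[OF cluster[OF i], of norm] w i by (simp add: norm_mult)
    thus "norm (G i - w) < norm (fps_nth (a k) 0 - w) / 2"
      using near \<zeta> i k J by auto
    show "norm (G k - fps_nth (a k) 0) < norm (fps_nth (a k) 0 - w) / 2"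
      using near \<zeta> k other[OF k] by auto
  qed
  have "G i \<noteq> G j" if ij: "i \<in> {1..d}" "j \<in> {1..d}" "i \<noteq> j" for i j
  proof -
    have a_ne: "eval_fps (a i) \<zeta> \<noteq> eval_fps (a j) \<zeta>"
      using sep ij \<zeta> by blast
    consider "i \<in> J" "j \<in> J" | "i \<in> J" "j \<notin> J" | "i \<notin> J" "j \<in> J" | "i \<notin> J" "j \<notin> J"
      by blast
    thus ?thesis
    proof cases
      case 1
      thus ?thesis using cluster[of i] cluster[of j] a_ne by auto
    qed (use mixed ij other a_ne in \<open>auto dest: sym\<close>)
  qed
  moreover have "G i = 0" if "i \<notin> {1..d}" for i
    using that J by (auto simp: G_def p cluster_homotopy_def)
  ultimately show ?thesis
    unfolding confY_def G_def by blast
qed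

lemma cluster_homotopy_diagonal:
  assumes "J \<subseteq> {1..d}" "\<forall>i\<in>J. fps_nth (a i) 0 = w"
    "\<forall>i\<in>{1..d}. norm z0 < fps_conv_radius (a i)"
  shows "cluster_homotopy a d J w z0 (t, t) i = (if i \<in> {1..d} then eval_fps (a i) (ee t * z0) else 0)"
proof (cases "i \<in> J")
  case True
  with assms cluster_homotopy_cluster_coord[of i J a w z0 t d t] show ?thesis
    by auto
qed (use assms in \<open>auto simp: cluster_homotopy_def\<close>)

lemma cluster_homotopy_bottom_edge:
  assumes "J \<subseteq> {1..d}" "\<forall>i\<in>J. fps_nth (a i) 0 = w" "Min J \<in> J"
    "\<forall>i\<in>{1..d}. norm z0 < fps_conv_radius (a i)"
  shows "cluster_homotopy a d J w z0 (t, 0) = cluster_loop a d J 1 z0 t"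
proof
  fix i
  have "cluster_b a J 1 z0 = w"
    using assms(2,3) by (simp add: cluster_b_def)
  with assms cluster_homotopy_cluster_coord[of i J a w z0 0 d t]
  show "cluster_homotopy a d J w z0 (t, 0) i = cluster_loop a d J 1 z0 t i"
    by (auto simp: cluster_homotopy_def cluster_loop_def)
qed

theorem mainTheorem5:
  fixes d :: nat and a :: "nat \<Rightarrow> complex fps" and \<epsilon> r' :: real
    and m l :: nat and z0 :: complex
  assumes "d \<ge> 2"
    and distinct: "\<forall>i\<in>{1..d}. \<forall>j\<in>{1..d}. i \<noteq> j \<longrightarrow> a i \<noteq> a j"
    and radius: "\<forall>i\<in>{1..d}. fps_conv_radius (a i) > 0"
    and "\<epsilon> > 0"
    and conv: "\<forall>i\<in>{1..d}. \<forall>z. norm z \<le> \<epsilon> \<longrightarrow> summable (\<lambda>k. fps_nth (a i) k * z ^ k)"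
    and sep: "\<forall>i\<in>{1..d}. \<forall>j\<in>{1..d}. i \<noteq> j \<longrightarrow>
               (\<forall>z. 0 < norm z \<and> norm z < \<epsilon> \<longrightarrow> eval_fps (a i) z \<noteq> eval_fps (a j) z)"
    and order: "\<forall>k\<in>{1..d}. \<forall>i j. k < i \<and> i \<le> j \<and> j \<le> d \<longrightarrow> eval_ij a k j \<le> eval_ij a k i"
    and J: "is_cluster a d {m..m+l-1} 1"
    and r': "0 < r'" "r' \<le> \<epsilon>"
    and r'_mu: "\<forall>z. norm z < r' \<longrightarrow> (\<forall>i\<in>{1..d}. \<forall>k\<in>{1..d} - {m..m+l-1}.
                 cmod (eval_fps (a i) z - fps_nth (a i) 0) < cmod (fps_nth (a k) 0 - fps_nth (a m) 0) / 2)"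
    and z0: "0 < norm z0" "norm z0 < r'"
  shows "homotopic_paths (confY d)
           (\<lambda>t i. if i \<in> {1..d} then eval_fps (a i) (ee t * z0) else 0)
           (cluster_loop a d {m..m+l-1} 1 z0 +++
            (\<lambda>t i. if i \<in> {m..m+l-1}
                   then fps_nth (a m) 0 + z0 * eval_fps (fps_shift 1 (a i - fps_const (fps_nth (a m) 0))) (ee t * z0)
                   else if i \<in> {1..d} then eval_fps (a i) (ee t * z0) else 0))"
proof -
  let ?J = "{m..m+l-1}" and ?w = "fps_nth (a m) 0"
  let ?G = "cluster_homotopy a d ?J ?w z0"
  have J_sub: "?J \<subseteq> {1..d}" and "card ?J \<ge> 2"
    using J unfolding is_cluster_def by auto
  hence m: "m \<in> ?J" "Min ?J = m"
    by (auto intro: Min_eqI)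
  have w: "\<forall>i\<in>?J. fps_nth (a i) 0 = ?w"
    using cluster_nth0_eq[OF J _ m(1)] by blast
  have rad: "\<forall>i\<in>{1..d}. norm z0 < fps_conv_radius (a i)"
    using conv z0 r' \<open>\<epsilon> > 0\<close> by (auto intro!: norm_less_fps_conv_radius)
  have sep_circle: "\<forall>i\<in>{1..d}. \<forall>j\<in>{1..d}. i \<noteq> j \<longrightarrow>
      (\<forall>\<zeta>. norm \<zeta> = norm z0 \<longrightarrow> eval_fps (a i) \<zeta> \<noteq> eval_fps (a j) \<zeta>)"
  proof (intro ballI impI allI)
    fix i j and \<zeta> :: complex
    assume ij: "i \<in> {1..d}" "j \<in> {1..d}" "i \<noteq> j" and "norm \<zeta> = norm z0"
    with z0 r' have "0 < norm \<zeta> \<and> norm \<zeta> < \<epsilon>" by simp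
    with sep ij show "eval_fps (a i) \<zeta> \<noteq> eval_fps (a j) \<zeta>" by blast
  qed
  have near_circle: "\<forall>\<zeta>. norm \<zeta> = norm z0 \<longrightarrow> (\<forall>i\<in>{1..d}. \<forall>k\<in>{1..d} - ?J.
      norm (eval_fps (a i) \<zeta> - fps_nth (a i) 0) < norm (fps_nth (a k) 0 - ?w) / 2)"
    using r'_mu z0 by auto
  have "?G \<in> {0..1} \<times> {0..1} \<rightarrow> confY d"
    by (intro Pi_I cluster_homotopy_in_confY[OF J_sub w rad sep_circle near_circle])
  note homotopy = homotopic_paths_diagonal_square[OF continuous_on_cluster_homotopy[OF J_sub rad] this]
  have diagonal: "(\<lambda>t. ?G (t, t)) = (\<lambda>t i. if i \<in> {1..d} then eval_fps (a i) (ee t * z0) else 0)"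
    by (intro ext cluster_homotopy_diagonal[OF J_sub w rad])
  have bottom: "(\<lambda>t. ?G (t, 0)) = cluster_loop a d ?J 1 z0"
    using cluster_homotopy_bottom_edge[OF J_sub w _ rad] m by auto
  have right: "(\<lambda>t. ?G (1, t)) = (\<lambda>t i. if i \<in> ?J
      then ?w + z0 * eval_fps (fps_shift 1 (a i - fps_const ?w)) (ee t * z0)
      else if i \<in> {1..d} then eval_fps (a i) (ee t * z0) else 0)"
    by (simp add: cluster_homotopy_def cong: if_cong)
  show ?thesis
    using homotopy unfolding diagonal bottom right .
qed

end
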